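(* Let $p$ be a prime, $w\ge1$, and $\mu\ge1$ an integer with $2^\mu<p$. Let $C\subseteq\mathbb{F}_{p^w}^n$ be a linear $[n,k]$ code whose dual code $C^\perp$ has minimum distance $d^\perp$. Let $\boldsymbol\tau=(\tau^{(1)},\dots,\tau^{(n)})$ be any family of functions $\tau^{(j)}:\mathbb{F}_{p^w}\to\{0,1\}^\mu$, and let $c_\mu=\frac{2^\mu\sin(\pi/2^\mu)}{p\sin(\pi/p)}$. Then \[ SD(\boldsymbol\tau(C),\boldsymbol\tau(\mathcal U_n))\le\frac12\,p^{w(n-k)}\,c_\mu^{d^\perp}. \]
   Context: For $S\subseteq\mathbb{F}_{p^w}^n$, $\boldsymbol\tau(S)$ is the distribution of $(\tau^{(1)}(x_1),\dots,\tau^{(n)}(x_n))$ with $\mathbf x$ uniform on $S$; $\mathcal U_n=\mathbb{F}_{p^w}^n$. $SD(X,Y)=\frac12\sum_z|\Pr[X=z]-\Pr[Y=z]|$. *)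

theory Defs
  imports "HOL-Analysis.Analysis" "HOL-Probability.Probability"
begin

definition hweight :: "'a::zero ^ 'n \<Rightarrow> nat" where
  "hweight x = card {i. x $ i \<noteq> 0}"

definition dual_code :: "('a::field ^ 'n) set \<Rightarrow> ('a ^ 'n) set" where
  "dual_code C = {y. \<forall>x\<in>C. (\<Sum>i\<in>UNIV. x $ i * y $ i) = 0}"

(* minimum distance of a linear code = minimum weight of a nonzero codeword;
   convention: n+1 if the code is {0} (standing in for +infinity) *)
definition min_dist :: "('a::zero ^ 'n) set \<Rightarrow> nat" where
  "min_dist S = (if S - {0} = {} then CARD('n) + 1 else Min (hweight ` (S - {0})))"

definition tau_dist :: "('n \<Rightarrow> 'a \<Rightarrow> 'b) \<Rightarrow> ('a ^ 'n) set \<Rightarrow> ('n \<Rightarrow> 'b) pmf" where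
  "tau_dist \<tau> S = map_pmf (\<lambda>x. (\<lambda>j. \<tau> j (x $ j))) (pmf_of_set S)"

definition SD :: "'b pmf \<Rightarrow> 'b pmf \<Rightarrow> real" where
  "SD X Y = (1/2) * (\<Sum>z\<in>set_pmf X \<union> set_pmf Y. \<bar>pmf X z - pmf Y z\<bar>)"

end

(* Let psi(x) = exp(2 pi i Tr(x) / p) be the canonical additive character of F_q, q = p^w.
   Poisson summation over the code C writes the difference of the two distributions at a point z
   as an average, over the nonzero codewords a of the dual code, of products over the coordinates j
   of the Fourier coefficients at -a_j of the indicators of the fibres of tau^(j) over z_j.
   Summed over z, the factor of coordinate j is q if a_j = 0, and otherwise at most q c_mu:
   rotating each fibre sum onto the positive real axis turns it into a sum of cosines of angles
   2 pi r / p - theta, where r = Tr(b t) is equidistributed; for each r only the largest of the at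
   most 2^mu cosines matters, a set of s vertices of the regular p-gon projects onto any direction
   with total length at most sin(pi s / p) / sin(pi / p) (an arc is optimal), and Jensen's
   inequality for the concave sine bounds the sum over the 2^mu fibres by
   2^mu sin(pi / 2^mu) / sin(pi / p).  Hence the statistical distance is at most
   1/2 sum_a c_mu^wt(a) <= 1/2 |dual C| c_mu^(d_perp), and |dual C| = q^(n-k). *)

theory Submission
  imports Defs "HOL-Number_Theory.Number_Theory" "HOL-Computational_Algebra.Polynomial"
begin

section \<open>Trigonometric estimates\<close>

lemma concave_on_sin: "concave_on {0..pi} sin"
  by (rule f''_le0_imp_concave[where f'=cos and f''="\<lambda>x. - sin x"])
     (auto intro!: DERIV_sin DERIV_cos sin_ge_zero)

lemma sin_div_antimono:
  assumes "0 < z" "z \<le> y" "y \<le> pi"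
  shows "sin y / y \<le> sin z / z"
proof -
  have "(1 - z / y) * sin 0 + z / y * sin y \<le> sin ((1 - z / y) *\<^sub>R 0 + (z / y) *\<^sub>R y)"
    by (rule concave_onD[OF concave_on_sin]) (use assms in auto)
  then have "z / y * sin y \<le> sin z"
    using assms by simp
  then show ?thesis
    using assms by (simp add: field_simps)
qed

lemma mult_sin_pi_divide_mono:
  fixes a b :: real
  assumes "1 \<le> a" "a \<le> b"
  shows "a * sin (pi / a) \<le> b * sin (pi / b)"
proof -
  have "sin (pi / a) / (pi / a) \<le> sin (pi / b) / (pi / b)"
    by (rule sin_div_antimono) (use assms in \<open>auto simp: field_simps\<close>)
  then show ?thesis
    using assms by (simp add: field_simps)
qed

lemma mult_sin_pi_divide_ratio_bounds:
  fixes a b :: real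
  assumes "1 \<le> a" "a \<le> b"
  shows "0 \<le> a * sin (pi / a) / (b * sin (pi / b))" "a * sin (pi / a) / (b * sin (pi / b)) \<le> 1"
proof -
  have "0 \<le> a * sin (pi / a)" and den: "0 \<le> b * sin (pi / b)"
    using assms by (intro mult_nonneg_nonneg sin_ge_zero; simp add: divide_le_eq)+
  then show "0 \<le> a * sin (pi / a) / (b * sin (pi / b))"
    by simp
  have "a * sin (pi / a) \<le> b * sin (pi / b)"
    using assms by (rule mult_sin_pi_divide_mono)
  moreover have "x / y \<le> 1" if "0 \<le> y" "x \<le> y" for x y :: real
    using that by (cases "y = 0") (simp_all add: divide_le_eq_1)
  ultimately show "a * sin (pi / a) / (b * sin (pi / b)) \<le> 1"
    using den by blast
qed

lemma sum_sin_pi_le: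
  fixes a :: "'i \<Rightarrow> real"
  assumes "finite S" "S \<noteq> {}" "\<And>i. i \<in> S \<Longrightarrow> 0 \<le> a i" "(\<Sum>i\<in>S. a i) = 1"
  shows "(\<Sum>i\<in>S. sin (pi * a i)) \<le> card S * sin (pi / card S)"
proof -
  let ?N = "real (card S)"
  have N: "?N > 0"
    using assms by (simp add: card_gt_0_iff)
  have le1: "a i \<le> 1" if "i \<in> S" for i
    using member_le_sum[of i S a] assms that by simp
  have "(\<lambda>x. - sin x) (\<Sum>i\<in>S. (1 / ?N) *\<^sub>R (pi * a i))
      \<le> (\<Sum>i\<in>S. (1 / ?N) * (\<lambda>x. - sin x) (pi * a i))"
    by (rule convex_on_sum[where C="{0..pi}"])
       (use assms N concave_on_sin le1 in \<open>auto simp: concave_on_def\<close>)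
  moreover have "(\<Sum>i\<in>S. (1 / ?N) *\<^sub>R (pi * a i)) = pi / ?N"
    using assms by (simp flip: sum_divide_distrib sum_distrib_left)
  ultimately have "(1 / ?N) * (\<Sum>i\<in>S. sin (pi * a i)) \<le> sin (pi / ?N)"
    by (simp add: sum_distrib_left sum_negf)
  then show ?thesis
    using N by (simp add: field_simps)
qed

lemma sum_cos_arith_progression:
  "2 * sin (d / 2) * (\<Sum>j<n. cos (x + real j * d))
     = 2 * cos (x + (real n - 1) * d / 2) * sin (real n * d / 2)"
proof -
  have "2 * sin (d / 2) * (\<Sum>j<n. cos (x + real j * d))
      = sin (x + (real n - 1/2) * d) - sin (x - d / 2)"
  proof (induction n)
    case (Suc n)
    have "sin (x + real n * d + d / 2) - sin (x + real n * d - d / 2)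
        = 2 * sin (d / 2) * cos (x + real n * d)"
      by (simp add: sin_add sin_diff)
    then have "2 * sin (d / 2) * cos (x + real n * d)
        = sin (x + (real n + 1/2) * d) - sin (x + (real n - 1/2) * d)"
      by (simp add: algebra_simps)
    with Suc show ?case
      by (simp add: algebra_simps)
  qed simp
  also have "\<dots> = 2 * cos (x + (real n - 1) * d / 2) * sin (real n * d / 2)"
    using sin_add[of "x + (real n - 1) * d / 2" "real n * d / 2"]
          sin_diff[of "x + (real n - 1) * d / 2" "real n * d / 2"]
    by (simp add: algebra_simps add_divide_distrib diff_divide_distrib)
  finally show ?thesis .
qed

lemma sum_cos_roots_arc_le:
  fixes p n :: nat and x :: real
  assumes "2 \<le> p" "n \<le> p"
  shows "(\<Sum>j<n. cos (x + real j * (2 * pi / p))) \<le> sin (pi * n / p) / sin (pi / p)"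
proof -
  have p: "real p \<ge> 2"
    using assms by simp
  have pos: "sin (pi / p) > 0"
    using p by (intro sin_gt_zero) (simp_all add: field_simps)
  have nonneg: "sin (pi * n / p) \<ge> 0"
    using p assms by (intro sin_ge_zero) (simp_all add: field_simps)
  have "2 * sin (pi / p) * (\<Sum>j<n. cos (x + real j * (2 * pi / p)))
      = 2 * cos (x + (real n - 1) * (2 * pi / p) / 2) * sin (pi * n / p)"
    using sum_cos_arith_progression[where d="2 * pi / p" and n=n and x=x] by (simp add: mult.commute)
  also have "\<dots> \<le> 2 * sin (pi * n / p)"
    using mult_right_mono[OF cos_le_one nonneg] by simp
  finally show ?thesis
    using pos by (simp add: field_simps)
qed

lemma cos_two_pi_divide_add_int:
  assumes "P \<noteq> 0"
  shows "cos (2 * pi * (x + P * of_int k) / P) = cos (2 * pi * x / P)"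
proof -
  have "2 * pi * (x + P * of_int k) / P = 2 * pi * x / P + 2 * pi * of_int k"
    using assms by (simp add: field_simps)
  then show ?thesis
    by (simp add: cos_add)
qed

lemma cos_two_pi_divide_ge:
  fixes P a y :: real
  assumes "0 < P" "\<bar>y\<bar> \<le> a / 2" "a \<le> P"
  shows "cos (pi * a / P) \<le> cos (2 * pi * y / P)"
proof -
  have "cos (pi * a / P) \<le> cos (2 * pi * \<bar>y\<bar> / P)"
    using assms by (intro cos_monotone_0_pi_le) (auto simp: field_simps)
  also have "2 * pi * \<bar>y\<bar> / P = \<bar>2 * pi * y / P\<bar>"
    using assms by (simp add: abs_mult)
  finally show ?thesis
    by (simp only: cos_abs_real)
qed

lemma cos_two_pi_divide_le:
  fixes P a y :: real
  assumes "0 < P" "0 \<le> a" "a / 2 \<le> \<bar>y\<bar>" "\<bar>y\<bar> \<le> P / 2"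
  shows "cos (2 * pi * y / P) \<le> cos (pi * a / P)"
proof -
  have "cos (2 * pi * y / P) = cos (2 * pi * \<bar>y\<bar> / P)"
    using assms cos_abs_real[of "2 * pi * y / P"] by (simp add: abs_mult)
  also have "\<dots> \<le> cos (pi * a / P)"
    using assms by (intro cos_monotone_0_pi_le) (auto simp: field_simps)
  finally show ?thesis .
qed

lemma sum_le_sum_threshold:
  fixes h :: "'x \<Rightarrow> real"
  assumes "finite B" "finite R" "card B = card R"
    and "\<And>x. x \<in> R \<Longrightarrow> l \<le> h x" "\<And>x. x \<in> B - R \<Longrightarrow> h x \<le> l"
  shows "sum h B \<le> sum h R"
proof -
  have card_eq: "card (B - R) = card (R - B)"
    using assms(1-3) card_Diff_subset_Int[of B R] card_Diff_subset_Int[of R B]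
    by (simp add: Int_commute)
  have "sum h B = sum h (B \<inter> R) + sum h (B - R)"
    using assms(1) by (simp add: sum.Int_Diff)
  also have "sum h (B - R) \<le> card (B - R) * l"
    using sum_bounded_above[of "B - R" h l] assms(5) by simp
  also have "card (B - R) * l \<le> sum h (R - B)"
    using sum_bounded_below[of "R - B" l h] assms(4) card_eq by simp
  also have "sum h (B \<inter> R) + sum h (R - B) = sum h R"
    using assms(2) sum.Int_Diff[of R h B] by (simp add: Int_commute)
  finally show ?thesis
    by simp
qed

lemma real_nat_mod_eq:
  assumes "0 < p"
  shows "real (nat (j mod int p)) = of_int j + real p * of_int (- (j div int p))"
proof -
  have "real (nat (j mod int p)) = of_int (j mod int p)"
    using assms by simp
  also have "\<dots> = of_int (j - int p * (j div int p))"
    by (simp only: minus_mult_div_eq_mod)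
  finally show ?thesis
    by simp
qed

definition residue_arc :: "nat \<Rightarrow> int \<Rightarrow> nat \<Rightarrow> nat set" where
  "residue_arc p c a = {r \<in> {..<p}. (int r - c) mod int p < int a}"

lemma bij_betw_residue_arc:
  assumes "0 < p" "a \<le> p"
  shows "bij_betw (\<lambda>i. nat ((c + int i) mod int p)) {..<a} (residue_arc p c a)"
proof (rule bij_betw_byWitness[where f'="\<lambda>r. nat ((int r - c) mod int p)"])
  show "\<forall>i\<in>{..<a}. nat ((int (nat ((c + int i) mod int p)) - c) mod int p) = i"
    using assms by (auto simp: mod_diff_left_eq)
  show "\<forall>r\<in>residue_arc p c a. nat ((c + int (nat ((int r - c) mod int p))) mod int p) = r"
    using assms by (auto simp: residue_arc_def mod_add_right_eq)
  show "(\<lambda>i. nat ((c + int i) mod int p)) ` {..<a} \<subseteq> residue_arc p c a"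
    using assms by (auto simp: residue_arc_def nat_less_iff mod_diff_left_eq)
  show "(\<lambda>r. nat ((int r - c) mod int p)) ` residue_arc p c a \<subseteq> {..<a}"
    using assms by (auto simp: residue_arc_def nat_less_iff)
qed

lemma cos_residue_arc_ge:
  fixes t :: real
  assumes "a \<le> p" "r \<in> residue_arc p \<lceil>t - a / 2\<rceil> a"
  shows "cos (pi * a / p) \<le> cos (2 * pi * (r - t) / p)"
proof -
  define c where "c = \<lceil>t - a / 2\<rceil>"
  define i where "i = (int r - c) mod int p"
  have p: "0 < p"
    using assms(2) by (simp add: residue_arc_def)
  have i: "0 \<le> i" "i < a"
    using assms(2) p by (simp_all add: residue_arc_def i_def c_def)
  have "real_of_int i \<le> of_int (int a - 1)"
    using i by (simp only: of_int_le_iff)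
  then have "\<bar>of_int (c + i) - t\<bar> \<le> a / 2"
    using i unfolding abs_le_iff c_def by linarith
  then have "cos (pi * a / p) \<le> cos (2 * pi * (of_int (c + i) - t) / p)"
    using p assms(1) by (intro cos_two_pi_divide_ge) simp_all
  also have "int r = c + i + int p * ((int r - c) div int p)"
    by (simp add: i_def)
  then have "real r - t = of_int (c + i) - t + real p * of_int ((int r - c) div int p)"
    by (metis of_int_add of_int_mult of_int_of_nat_eq add_diff_eq diff_add_eq)
  then have "cos (2 * pi * (of_int (c + i) - t) / p) = cos (2 * pi * (r - t) / p)"
    using p by (simp only: cos_two_pi_divide_add_int of_nat_eq_0_iff neq0_conv)
  finally show ?thesis .
qed

lemma cos_residue_arc_le:
  fixes t :: real
  assumes "a \<le> p" "r < p" "r \<notin> residue_arc p \<lceil>t - a / 2\<rceil> a"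
  shows "cos (2 * pi * (r - t) / p) \<le> cos (pi * a / p)"
proof -
  define c where "c = \<lceil>t - a / 2\<rceil>"
  define k where "k = \<lfloor>(r - t) / p + 1/2\<rfloor>"
  define j where "j = int r - int p * k"
  have p: "0 < real p"
    using assms(2) by simp
  have "of_int k \<le> (r - t) / p + 1/2" "(r - t) / p + 1/2 < of_int k + 1"
    unfolding k_def by linarith+
  then have "real p * of_int k \<le> r - t + p / 2" "r - t + p / 2 < real p * of_int k + p"
    using p by (simp_all add: field_simps)
  moreover have j: "real_of_int j = real r - real p * of_int k"
    by (simp add: j_def)
  ultimately have j_close: "\<bar>of_int j - t\<bar> \<le> p / 2"
    unfolding abs_le_iff by linarith
  have "(j - c) mod int p = (int r - c) mod int p"
    using mod_mult_self1[of "int r - c" "- k" "int p"] by (simp add: j_def algebra_simps)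
  moreover have "(j - c) mod int p = j - c" if "c \<le> j" "j < c + a"
    using that assms(1) by (intro mod_pos_pos_trivial) auto
  ultimately have "\<not> (c \<le> j \<and> j < c + a)"
    using assms by (auto simp: residue_arc_def c_def)
  then have "a / 2 \<le> \<bar>of_int j - t\<bar>"
    unfolding c_def by linarith
  then have "cos (2 * pi * (of_int j - t) / p) \<le> cos (pi * a / p)"
    using p j_close by (intro cos_two_pi_divide_le) auto
  moreover have "real r - t = of_int j - t + real p * of_int k"
    using j by simp
  then have "cos (2 * pi * (r - t) / p) = cos (2 * pi * (of_int j - t) / p)"
    using p by (simp only: cos_two_pi_divide_add_int of_nat_eq_0_iff)
  ultimately show ?thesis
    by simp
qed

text \<open>Among all sets of \<open>card B\<close> vertices of the regular \<open>p\<close>-gon, the sum of the projections onto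
  the direction \<open>\<theta>\<close> is largest for an arc of consecutive vertices centred at \<open>\<theta>\<close>.\<close>

lemma sum_cos_roots_le:
  fixes p :: nat and B :: "nat set"
  assumes p: "2 \<le> p" and B: "B \<subseteq> {..<p}"
  shows "(\<Sum>r\<in>B. cos (2 * pi * r / p - \<theta>)) \<le> sin (pi * card B / p) / sin (pi / p)"
proof -
  define a where "a = card B"
  have a: "a \<le> p"
    unfolding a_def using card_mono[OF _ B] by simp
  define t where "t = \<theta> * p / (2 * pi)"
  define c where "c = \<lceil>t - a / 2\<rceil>"
  define h where "h x = cos (2 * pi * (x - t) / p)" for x :: real
  have bij: "bij_betw (\<lambda>i. nat ((c + int i) mod int p)) {..<a} (residue_arc p c a)"
    using p a by (intro bij_betw_residue_arc) simp_all
  have h_mod: "h (real (nat (j mod int p))) = h (of_int j)" for j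
  proof -
    have "real (nat (j mod int p)) - t = (of_int j - t) + real p * of_int (- (j div int p))"
      using p real_nat_mod_eq[of p j] by simp
    then show ?thesis
      using p by (simp only: h_def cos_two_pi_divide_add_int of_nat_eq_0_iff)
  qed
  have "2 * pi * r / p - \<theta> = 2 * pi * (r - t) / p" for r :: nat
    using p by (simp add: t_def field_simps)
  then have "(\<Sum>r\<in>B. cos (2 * pi * r / p - \<theta>)) = (\<Sum>r\<in>B. h r)"
    by (simp add: h_def)
  also have "\<dots> \<le> (\<Sum>r\<in>residue_arc p c a. h r)"
    using bij_betw_same_card[OF bij] B finite_subset[OF B] a
      cos_residue_arc_ge[of a p _ t] cos_residue_arc_le[of a p _ t]
    by (intro sum_le_sum_threshold[where l="cos (pi * a / p)"])
       (auto simp: a_def c_def h_def residue_arc_def)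
  also have "\<dots> = (\<Sum>i<a. h (real (nat ((c + int i) mod int p))))"
    by (rule sum.reindex_bij_betw[OF bij, symmetric])
  also have "\<dots> = (\<Sum>i<a. h (of_int (c + int i)))"
    by (simp only: h_mod)
  also have "\<dots> = (\<Sum>i<a. cos (2 * pi * (of_int c - t) / p + real i * (2 * pi / p)))"
    using p by (intro sum.cong refl arg_cong[where f=cos]) (simp add: h_def field_simps)
  also have "\<dots> \<le> sin (pi * card B / p) / sin (pi / p)"
    unfolding a_def using p a by (intro sum_cos_roots_arc_le) (simp_all add: a_def)
  finally show ?thesis .
qed

lemma sum_Max_cos_roots_le:
  fixes p m :: nat and L :: "'l set" and \<theta> :: "'l \<Rightarrow> real"
  assumes p: "2 \<le> p" and L: "finite L" "L \<noteq> {}" "card L \<le> m"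
  shows "(\<Sum>r<p. Max ((\<lambda>l. cos (2 * pi * r / p - \<theta> l)) ` L))
           \<le> m * sin (pi / m) / sin (pi / p)"
proof -
  have "\<forall>r::nat. \<exists>l. l \<in> L \<and> Max ((\<lambda>l. cos (2 * pi * r / p - \<theta> l)) ` L) = cos (2 * pi * r / p - \<theta> l)"
    using L by (metis (no_types, lifting) Max_in finite_imageI image_iff image_is_empty)
  then obtain sel :: "nat \<Rightarrow> 'l" where "\<forall>r. sel r \<in> L \<and>
      Max ((\<lambda>l. cos (2 * pi * r / p - \<theta> l)) ` L) = cos (2 * pi * r / p - \<theta> (sel r))"
    by (rule choice [THEN exE])
  then have sel: "\<And>r. sel r \<in> L"
    "\<And>r. Max ((\<lambda>l. cos (2 * pi * r / p - \<theta> l)) ` L) = cos (2 * pi * r / p - \<theta> (sel r))"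
    by simp_all
  define B where "B l = {r \<in> {..<p}. sel r = l}" for l
  have group: "(\<Sum>l\<in>L. \<Sum>r\<in>B l. f r) = (\<Sum>r<p. f r)" for f :: "nat \<Rightarrow> real"
    unfolding B_def by (rule sum.group) (use L sel in auto)
  have "(\<Sum>r<p. Max ((\<lambda>l. cos (2 * pi * r / p - \<theta> l)) ` L))
      = (\<Sum>r<p. cos (2 * pi * r / p - \<theta> (sel r)))"
    by (simp only: sel(2))
  also have "\<dots> = (\<Sum>l\<in>L. \<Sum>r\<in>B l. cos (2 * pi * r / p - \<theta> (sel r)))"
    by (rule group [symmetric])
  also have "\<dots> = (\<Sum>l\<in>L. \<Sum>r\<in>B l. cos (2 * pi * r / p - \<theta> l))"
    by (intro sum.cong refl) (simp add: B_def)
  also have "\<dots> \<le> (\<Sum>l\<in>L. sin (pi * card (B l) / p) / sin (pi / p))"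
    by (intro sum_mono sum_cos_roots_le p) (auto simp: B_def)
  also have "\<dots> = (\<Sum>l\<in>L. sin (pi * (card (B l) / p))) / sin (pi / p)"
    by (simp add: sum_divide_distrib)
  also have "(\<Sum>l\<in>L. sin (pi * (card (B l) / p))) \<le> card L * sin (pi / card L)"
  proof (rule sum_sin_pi_le[OF L(1,2)])
    have "(\<Sum>l\<in>L. real (card (B l))) = p"
      using group[of "\<lambda>_. 1"] by simp
    then show "(\<Sum>l\<in>L. card (B l) / real p) = 1"
      using p by (simp flip: sum_divide_distrib)
  qed simp
  also have "card L * sin (pi / card L) \<le> m * sin (pi / m)"
    using L by (intro mult_sin_pi_divide_mono) (auto simp: Suc_le_eq card_gt_0_iff)
  finally show ?thesis
    using p sin_gt_zero[of "pi / p"] by (simp add: divide_right_mono)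
qed

section \<open>The canonical additive character of a finite field\<close>

lemma prime_CHAR_finite_field: "prime CHAR('a::{field,finite})"
  by (intro prime_CHAR_semidom finite_imp_CHAR_pos) simp

lemma two_le_CHAR_finite_field: "2 \<le> CHAR('a::{field,finite})"
  using prime_CHAR_finite_field[where 'a='a] prime_ge_2_nat by blast

lemma CHAR_eq_if_card_eq_prime_power:
  assumes "prime p" "CARD('a::{field,finite}) = p ^ w"
  shows "CHAR('a) = p"
proof -
  have "CHAR('a) dvd p ^ w"
    using CHAR_dvd_CARD[where 'a='a] assms(2) by simp
  then have "CHAR('a) dvd p"
    using prime_dvd_power prime_CHAR_finite_field[where 'a='a] by blast
  then show ?thesis
    using assms(1) prime_CHAR_finite_field[where 'a='a] by (simp add: primes_dvd_imp_eq)
qed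

lemma power_card_minus_one_eq_1:
  fixes x :: "'a::{field,finite}"
  assumes "x \<noteq> 0"
  shows "x ^ (CARD('a) - 1) = 1"
proof -
  let ?U = "UNIV - {0 :: 'a}"
  have "(\<Prod>y\<in>?U. x * y) = (\<Prod>y\<in>?U. y)"
    by (rule prod.reindex_bij_witness[of _ "\<lambda>y. y / x" "\<lambda>y. x * y"]) (use assms in auto)
  moreover have "(\<Prod>y\<in>?U. x * y) = x ^ card ?U * (\<Prod>y\<in>?U. y)"
    by (simp add: prod.distrib)
  moreover have "card ?U = CARD('a) - 1"
    by (simp add: card_Diff_singleton)
  moreover have "(\<Prod>y\<in>?U. y) \<noteq> 0"
    by simp
  ultimately show ?thesis
    by simp
qed

lemma power_card_eq_self: "(x :: 'a::{field,finite}) ^ CARD('a) = x"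
proof (cases "x = 0")
  case False
  have "x ^ CARD('a) = x * x ^ (CARD('a) - 1)"
    by (simp flip: power_Suc)
  then show ?thesis
    using power_card_minus_one_eq_1[OF False] by simp
qed simp

lemma of_nat_power_CHAR: "(of_nat n :: 'a::{field,finite}) ^ CHAR('a) = of_nat n"
proof (induction n)
  case (Suc n)
  have "(of_nat n + 1 :: 'a) ^ CHAR('a) = of_nat n ^ CHAR('a) + 1 ^ CHAR('a)"
    by (rule freshmans_dream[OF prime_CHAR_finite_field refl])
  with Suc show ?case
    by (simp add: add.commute)
qed (use prime_CHAR_finite_field[where 'a='a] prime_gt_0_nat in simp)

text \<open>The roots of \<open>X\<^sup>p - X\<close> are exactly the \<open>p\<close> elements of the prime field.\<close>

lemma Frobenius_fixed_imp_of_nat: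
  fixes z :: "'a::{field,finite}"
  assumes "z ^ CHAR('a) = z"
  shows "\<exists>i<CHAR('a). z = of_nat i"
proof -
  define p where "p = CHAR('a)"
  have p: "2 \<le> p"
    unfolding p_def by (rule two_le_CHAR_finite_field)
  define P where "P = Polynomial.monom (1::'a) p - [:0, 1:]"
  have poly_P: "poly P y = y ^ p - y" for y
    by (simp add: P_def poly_monom)
  have "Polynomial.coeff P p = 1"
    using p by (simp add: P_def coeff_pCons split: nat.split)
  then have P: "P \<noteq> 0"
    by auto
  have "degree P \<le> p"
    unfolding P_def by (rule degree_diff_le) (use p degree_monom_le in auto)
  then have card_roots: "card {y. poly P y = 0} \<le> p"
    using card_poly_roots_bound[OF P] by simp
  have inj: "inj_on (of_nat :: nat \<Rightarrow> 'a) {..<p}"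
    by (rule inj_onI) (simp add: p_def of_nat_eq_iff_cong_CHAR cong_def)
  have sub: "(of_nat :: nat \<Rightarrow> 'a) ` {..<p} \<subseteq> {y. poly P y = 0}"
    using of_nat_power_CHAR by (auto simp: poly_P p_def)
  have "(of_nat :: nat \<Rightarrow> 'a) ` {..<p} = {y. poly P y = 0}"
    using card_roots card_image[OF inj] card_mono[OF poly_roots_finite[OF P] sub]
    by (intro card_subset_eq sub poly_roots_finite[OF P]) simp
  moreover have "poly P z = 0"
    using assms by (simp add: poly_P p_def)
  ultimately show ?thesis
    unfolding p_def by auto
qed

definition field_trace :: "nat \<Rightarrow> 'a::field \<Rightarrow> 'a" where
  "field_trace w x = (\<Sum>i<w. x ^ CHAR('a) ^ i)"

lemma field_trace_add:
  "field_trace w (x + y) = field_trace w x + field_trace w (y :: 'a::{field,finite})"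
  unfolding field_trace_def
  by (simp add: freshmans_dream'[OF prime_CHAR_finite_field refl] sum.distrib)

lemma field_trace_0 [simp]: "field_trace w (0 :: 'a::{field,finite}) = 0"
  using prime_CHAR_finite_field[where 'a='a] by (simp add: field_trace_def prime_gt_0_nat power_0_left)

lemma field_trace_power_CHAR:
  assumes "CARD('a::{field,finite}) = CHAR('a) ^ w"
  shows "field_trace w (x :: 'a) ^ CHAR('a) = field_trace w x"
proof -
  define f where "f i = x ^ CHAR('a) ^ i" for i
  have "field_trace w x ^ CHAR('a) = (\<Sum>i<w. f i ^ CHAR('a))"
    unfolding field_trace_def f_def by (rule freshmans_dream_sum[OF prime_CHAR_finite_field refl])
  also have "\<dots> = (\<Sum>i<w. f (Suc i))"
    unfolding f_def by (simp only: power_Suc2 power_mult)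
  finally have "field_trace w x ^ CHAR('a) = (\<Sum>i<w. f (Suc i))" .
  moreover have "(\<Sum>i<Suc w. f i) = f 0 + (\<Sum>i<w. f (Suc i))"
    by (rule sum.lessThan_Suc_shift)
  moreover have "(\<Sum>i<Suc w. f i) = field_trace w x + f w"
    by (simp add: field_trace_def f_def)
  moreover have "f w = f 0"
    using assms power_card_eq_self[of x] by (simp add: f_def)
  ultimately show ?thesis
    by (simp add: add.commute)
qed

lemma field_trace_nonzero:
  assumes "CARD('a::{field,finite}) = CHAR('a) ^ w"
  shows "\<exists>x::'a. field_trace w x \<noteq> 0"
proof -
  define p where "p = CHAR('a)"
  have p: "2 \<le> p"
    unfolding p_def by (rule two_le_CHAR_finite_field)
  have "2 \<le> CARD('a)"
    using card_mono[of "UNIV :: 'a set" "{0, 1}"] by simp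
  then have "w \<noteq> 0"
    using assms by (intro notI) simp
  define T where "T = (\<Sum>i<w. Polynomial.monom (1::'a) (p ^ i))"
  have poly_T: "poly T x = field_trace w x" for x
    by (simp add: T_def field_trace_def p_def poly_sum poly_monom)
  have "Polynomial.coeff T (p ^ (w - 1)) = (\<Sum>i<w. if i = w - 1 then 1 else 0)"
    using p by (simp add: T_def coeff_sum power_inject_exp)
  also have "\<dots> = 1"
    using \<open>w \<noteq> 0\<close> by simp
  finally have T: "T \<noteq> 0"
    by auto
  have "degree T \<le> p ^ (w - 1)"
    unfolding T_def
    by (rule degree_sum_le) (use p in \<open>auto intro: order.trans[OF degree_monom_le] power_increasing\<close>)
  then have "card {y. poly T y = 0} \<le> p ^ (w - 1)"
    using card_poly_roots_bound[OF T] by simp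
  also have "\<dots> < CARD('a)"
    using p \<open>w \<noteq> 0\<close> assms by (simp add: p_def power_strict_increasing)
  finally have "{y. poly T y = 0} \<noteq> UNIV"
    by auto
  then show ?thesis
    by (auto simp: poly_T)
qed

lemma field_trace_mult_prime_field:
  assumes "c ^ CHAR('a) = (c :: 'a::{field,finite})"
  shows "field_trace w (c * x) = c * field_trace w x"
proof -
  have "c ^ CHAR('a) ^ i = c" for i
    by (induction i) (simp_all add: power_mult assms flip: power_Suc2)
  then show ?thesis
    by (simp add: field_trace_def power_mult_distrib sum_distrib_left)
qed

lemma of_nat_mod_CHAR: "of_nat (n mod CHAR('a)) = (of_nat n :: 'a::semiring_1_cancel)"
  by (simp add: of_nat_eq_iff_cong_CHAR cong_def)

definition trace_nat :: "nat \<Rightarrow> 'a::field \<Rightarrow> nat" where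
  "trace_nat w x = (THE i. i < CHAR('a) \<and> of_nat i = field_trace w x)"

definition add_char :: "nat \<Rightarrow> 'a::field \<Rightarrow> complex" where
  "add_char w x = cis (2 * pi * trace_nat w x / CHAR('a))"

lemma cis_two_pi_divide_mod:
  assumes "0 < p"
  shows "cis (2 * pi * real (n mod p) / p) = cis (2 * pi * n / p)"
proof -
  have "real n = real (n mod p) + real p * real (n div p)"
    by (metis mod_mult_div_eq of_nat_add of_nat_mult)
  then have "2 * pi * real n / p = 2 * pi * real (n mod p) / p + 2 * pi * real (n div p)"
    using assms by (simp add: field_simps)
  then show ?thesis
    by (simp flip: cis_mult)
qed

section \<open>Linear codes and coordinatewise images\<close>

definition dot_prod :: "'a::field ^ 'n \<Rightarrow> 'a ^ 'n \<Rightarrow> 'a" where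
  "dot_prod x y = (\<Sum>i\<in>UNIV. x $ i * y $ i)"

lemma dual_code_dot_prod: "dual_code C = {y. \<forall>x\<in>C. dot_prod x y = 0}"
  unfolding dual_code_def dot_prod_def ..

lemma dot_prod_add_left: "dot_prod (x + y) a = dot_prod x a + dot_prod y a"
  by (simp add: dot_prod_def distrib_right sum.distrib)

lemma dot_prod_diff_left: "dot_prod (x - y) a = dot_prod x a - dot_prod y a"
  by (simp add: dot_prod_def left_diff_distrib sum_subtractf)

lemma dot_prod_scale_left: "dot_prod (c *s x) a = c * dot_prod x a"
  by (simp add: dot_prod_def sum_distrib_left mult.assoc)

lemma dot_prod_commute: "dot_prod x y = dot_prod y x"
  by (simp add: dot_prod_def mult.commute)

lemma dot_prod_0_left [simp]: "dot_prod 0 a = 0"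
  by (simp add: dot_prod_def)

lemma dot_prod_0_right [simp]: "dot_prod a 0 = 0"
  by (simp add: dot_prod_def)

lemma dot_prod_axis_left: "dot_prod (axis i 1) v = v $ i"
proof -
  have "dot_prod (axis i 1) v = (\<Sum>j\<in>UNIV. if j = i then v $ j else 0)"
    unfolding dot_prod_def by (intro sum.cong) (auto simp: axis_def)
  then show ?thesis
    by simp
qed

lemma card_subspace_ge:
  assumes V: "vec.subspace (C :: ('a::{field,finite} ^ 'n) set)"
  shows "CARD('a) ^ vec.dim C \<le> card C"
proof -
  obtain B where B: "B \<subseteq> C" "vec.independent B" "card B = vec.dim C"
    by (rule vec.basis_exists[of C])
  have "finite B"
    using B(2) vec.independent_explicit by blast
  have indep: "\<forall>v\<in>B. c v = 0" if "(\<Sum>v\<in>B. c v *s v) = 0" for c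
    using B(2) that vec.independent_explicit by blast
  define g where "g u = (\<Sum>v\<in>B. u v *s v)" for u
  have inj: "inj_on g (B \<rightarrow>\<^sub>E UNIV)"
  proof (rule inj_onI)
    fix u u'
    assume u: "u \<in> B \<rightarrow>\<^sub>E UNIV" "u' \<in> B \<rightarrow>\<^sub>E UNIV" and "g u = g u'"
    then have "(\<Sum>v\<in>B. (u v - u' v) *s v) = 0"
      by (simp add: g_def vec.scale_left_diff_distrib sum_subtractf)
    then have "\<forall>v\<in>B. u v - u' v = 0"
      by (rule indep)
    then show "u = u'"
      using u by (auto intro!: extensionalityI[of _ B] simp: PiE_def)
  qed
  have "g ` (B \<rightarrow>\<^sub>E UNIV) \<subseteq> C"
    unfolding g_def using B(1) V by (auto intro!: vec.subspace_sum vec.subspace_scale)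
  then have "card (g ` (B \<rightarrow>\<^sub>E UNIV)) \<le> card C"
    by (intro card_mono) simp_all
  then show ?thesis
    using \<open>finite B\<close> B(3) by (simp add: card_image[OF inj] card_PiE)
qed

lemma sum_power_hweight_le:
  fixes c :: real and D :: "('a::zero ^ 'n) set"
  assumes "0 \<le> c" "c \<le> 1"
  shows "(\<Sum>a\<in>D - {0}. c ^ hweight a) \<le> card (D - {0}) * c ^ min_dist D"
proof -
  have "c ^ hweight a \<le> c ^ min_dist D" if a: "a \<in> D - {0}" for a
  proof (rule power_decreasing[OF _ assms])
    have "min_dist D = Min (hweight ` (D - {0}))"
      using a by (auto simp: min_dist_def)
    also have "\<dots> \<le> hweight a"
    proof (rule Min_le)
      have "hweight x \<le> CARD('n)" for x :: "'a ^ 'n"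
        unfolding hweight_def by (rule card_mono) auto
      then show "finite (hweight ` (D - {0}))"
        by (auto intro: finite_subset[of _ "{..CARD('n)}"])
    qed (use a in auto)
    finally show "min_dist D \<le> hweight a" .
  qed
  then show ?thesis
    using sum_bounded_above[of "D - {0}" "\<lambda>a. c ^ hweight a"] by simp
qed

lemma sum_vec_prod_eq_prod_sum:
  fixes g :: "'n::finite \<Rightarrow> 'a::finite \<Rightarrow> 'c::comm_semiring_1"
  shows "(\<Sum>y\<in>(UNIV :: ('a ^ 'n) set). \<Prod>j\<in>UNIV. g j (y $ j)) = (\<Prod>j\<in>UNIV. \<Sum>t\<in>UNIV. g j t)"
proof -
  have "(\<Prod>j\<in>UNIV. \<Sum>t\<in>UNIV. g j t) = (\<Sum>h\<in>UNIV \<rightarrow>\<^sub>E UNIV. \<Prod>j\<in>UNIV. g j (h j))"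
    by (rule prod_sum_PiE) auto
  also have "\<dots> = (\<Sum>h\<in>UNIV. \<Prod>j\<in>UNIV. g j (h j))"
    by simp
  also have "\<dots> = (\<Sum>y\<in>(UNIV :: ('a ^ 'n) set). \<Prod>j\<in>UNIV. g j (y $ j))"
    by (rule sum.reindex_bij_witness[of UNIV vec_nth vec_lambda]) (auto simp: fun_eq_iff)
  finally show ?thesis ..
qed

lemma norm_eq_Re_cis_Arg: "cmod z = Re (cis (- Arg z) * z)"
proof (cases "z = 0")
  case False
  have "cis (- Arg z) * z = cis (- Arg z) * rcis (cmod z) (Arg z)"
    by (simp add: rcis_cmod_Arg)
  also have "\<dots> = cmod z"
    by (simp add: rcis_def cis_mult)
  finally show ?thesis
    by simp
qed simp

lemma pmf_tau_dist:
  assumes "finite S" "S \<noteq> {}"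
  shows "pmf (tau_dist \<tau> S) z = card {x\<in>S. (\<lambda>j. \<tau> j (x $ j)) = z} / card S"
proof -
  have "S \<inter> (\<lambda>x j. \<tau> j (x $ j)) -` {z} = {x\<in>S. (\<lambda>j. \<tau> j (x $ j)) = z}"
    by auto
  then show ?thesis
    using assms by (simp add: tau_dist_def pmf_map measure_pmf_of_set)
qed

lemma set_pmf_tau_dist:
  assumes "finite S" "S \<noteq> {}"
  shows "set_pmf (tau_dist \<tau> S) = (\<lambda>x j. \<tau> j (x $ j)) ` S"
  using assms by (simp add: tau_dist_def)

text \<open>The Fourier coefficient at \<open>b\<close> of the indicator of the fibre \<open>f\<^sup>-\<^sup>1(l)\<close>.\<close>

definition fiber_fourier :: "nat \<Rightarrow> ('a::field \<Rightarrow> 'l) \<Rightarrow> 'a \<Rightarrow> 'l \<Rightarrow> complex" where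
  "fiber_fourier w f b l = (\<Sum>t\<in>{t. f t = l}. add_char w (b * t))"

lemma card_range_bool_lists_le:
  assumes "\<And>x. length (f x) = \<mu>"
  shows "card (range (f :: 'a \<Rightarrow> bool list)) \<le> 2 ^ \<mu>"
proof -
  have "card (range f) \<le> card {xs :: bool list. set xs \<subseteq> UNIV \<and> length xs = \<mu>}"
    using assms by (intro card_mono finite_lists_length_eq) auto
  then show ?thesis
    using card_lists_length_eq[of "UNIV :: bool set" \<mu>] by simp
qed

section \<open>Character sums\<close>

context
  fixes w :: nat
  assumes card: "CARD('a::{field,finite}) = CHAR('a) ^ w"
begin

lemma trace_nat: "trace_nat w (x :: 'a) < CHAR('a)" "of_nat (trace_nat w x) = field_trace w x"
proof -
  obtain i where i: "i < CHAR('a)" "field_trace w x = of_nat i"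
    using Frobenius_fixed_imp_of_nat[OF field_trace_power_CHAR[OF card]] by blast
  have "\<exists>!i. i < CHAR('a) \<and> of_nat i = field_trace w x"
    using i by (intro ex1I[of _ i]) (auto simp: of_nat_eq_iff_cong_CHAR cong_def)
  then have "trace_nat w x < CHAR('a) \<and> of_nat (trace_nat w x) = field_trace w x"
    unfolding trace_nat_def by (rule theI')
  then show "trace_nat w x < CHAR('a)" "of_nat (trace_nat w x) = field_trace w x"
    by simp_all
qed

lemma trace_nat_eqI:
  assumes "i < CHAR('a)" "of_nat i = field_trace w (x :: 'a)"
  shows "trace_nat w x = i"
proof -
  have "of_nat (trace_nat w x) = (of_nat i :: 'a)"
    using trace_nat(2)[of x] assms(2) by simp
  then have "[trace_nat w x = i] (mod CHAR('a))"
    by (simp only: of_nat_eq_iff_cong_CHAR)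
  then show ?thesis
    using trace_nat(1)[of x] assms(1) by (simp add: cong_def)
qed

lemma trace_nat_add: "trace_nat w (x + y :: 'a) = (trace_nat w x + trace_nat w y) mod CHAR('a)"
  using trace_nat[of x] trace_nat[of y] two_le_CHAR_finite_field[where 'a='a]
  by (intro trace_nat_eqI) (simp_all add: field_trace_add of_nat_mod_CHAR)

lemma trace_nat_0: "trace_nat w (0 :: 'a) = 0"
  using two_le_CHAR_finite_field[where 'a='a] by (intro trace_nat_eqI) simp_all

lemma trace_nat_surj:
  assumes "r < CHAR('a)"
  shows "\<exists>x::'a. trace_nat w x = r"
proof -
  obtain x1 :: 'a where x1: "field_trace w x1 \<noteq> 0"
    using field_trace_nonzero[OF card] by blast
  define c where "c = of_nat r / field_trace w x1"
  have "c ^ CHAR('a) = c"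
    by (simp add: c_def power_divide of_nat_power_CHAR field_trace_power_CHAR[OF card])
  then have "field_trace w (c * x1) = c * field_trace w x1"
    by (rule field_trace_mult_prime_field)
  also have "\<dots> = of_nat r"
    using x1 by (simp add: c_def)
  finally have "field_trace w (c * x1) = of_nat r" .
  then show ?thesis
    using assms by (intro exI[of _ "c * x1"] trace_nat_eqI) simp_all
qed

lemma sum_trace_nat_fibers:
  "(\<Sum>x\<in>UNIV. g (trace_nat w (x :: 'a)))
     = (\<Sum>r<CHAR('a). of_nat (card {x::'a. trace_nat w x = r}) * (g r :: 'b::comm_semiring_1))"
proof -
  have "(\<Sum>x\<in>UNIV. g (trace_nat w (x :: 'a)))
      = (\<Sum>r<CHAR('a). \<Sum>x\<in>{x \<in> (UNIV :: 'a set). trace_nat w x = r}. g (trace_nat w x))"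
    by (rule sum.group[of UNIV "{..<CHAR('a)}" "trace_nat w" "\<lambda>x. g (trace_nat w x)", symmetric])
       (use trace_nat(1) in auto)
  then show ?thesis
    by simp
qed

lemma trace_nat_fiber_eq_image_add:
  assumes "trace_nat w xr = r" "r < CHAR('a)"
  shows "{x::'a. trace_nat w x = r} = (\<lambda>y. y + xr) ` {y. trace_nat w y = 0}"
proof (intro equalityI subsetI)
  fix x :: 'a
  assume "x \<in> {x. trace_nat w x = r}"
  then have "[trace_nat w (x - xr) + r = 0 + r] (mod CHAR('a))"
    using trace_nat_add[of "x - xr" xr] assms by (simp add: cong_def)
  then have "[trace_nat w (x - xr) = 0] (mod CHAR('a))"
    by (simp only: cong_add_rcancel_nat)
  then have "trace_nat w (x - xr) = 0"
    using trace_nat(1)[of "x - xr"] by (simp add: cong_def)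
  then show "x \<in> (\<lambda>y. y + xr) ` {y. trace_nat w y = 0}"
    by (intro image_eqI[of _ _ "x - xr"]) simp_all
qed (use assms in \<open>auto simp: trace_nat_add\<close>)

lemma card_trace_nat_fiber:
  assumes "r < CHAR('a)"
  shows "CHAR('a) * card {x::'a. trace_nat w x = r} = CARD('a)"
proof -
  define F where "F r = {x::'a. trace_nat w x = r}" for r
  have card_F: "card (F r) = card (F 0)" if r: "r < CHAR('a)" for r
  proof -
    obtain xr :: 'a where "trace_nat w xr = r"
      using trace_nat_surj[OF r] by blast
    then have "F r = (\<lambda>y. y + xr) ` F 0"
      unfolding F_def using r by (rule trace_nat_fiber_eq_image_add)
    then show ?thesis
      by (simp add: card_image)
  qed
  have "CARD('a) = (\<Sum>r<CHAR('a). card (F r))"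
    using sum_trace_nat_fibers[where g="\<lambda>_. 1 :: nat"] by (simp add: F_def)
  also have "\<dots> = (\<Sum>r<CHAR('a). card (F 0))"
    by (intro sum.cong refl card_F) simp
  finally show ?thesis
    using card_F[OF assms] by (simp add: F_def)
qed

lemma sum_trace_nat:
  "(\<Sum>x\<in>UNIV. g (trace_nat w (x :: 'a))) = CARD('a) / CHAR('a) * (\<Sum>r<CHAR('a). g r :: real)"
proof -
  have "(\<Sum>x\<in>UNIV. g (trace_nat w (x :: 'a)))
      = (\<Sum>r<CHAR('a). card {x::'a. trace_nat w x = r} * g r)"
    by (rule sum_trace_nat_fibers)
  also have "\<dots> = (\<Sum>r<CHAR('a). CARD('a) / CHAR('a) * g r)"
    using card_trace_nat_fiber two_le_CHAR_finite_field[where 'a='a]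
    by (intro sum.cong refl) (simp add: field_simps flip: of_nat_mult)
  finally show ?thesis
    by (simp add: sum_distrib_left)
qed

lemma add_char_add: "add_char w (x + y :: 'a) = add_char w x * add_char w y"
proof -
  have "add_char w (x + y) = cis (2 * pi * (trace_nat w x + trace_nat w y) / CHAR('a))"
    unfolding add_char_def trace_nat_add
    using two_le_CHAR_finite_field[where 'a='a] by (intro cis_two_pi_divide_mod) simp
  also have "\<dots> = add_char w x * add_char w y"
    by (simp add: add_char_def cis_mult add_divide_distrib distrib_left)
  finally show ?thesis .
qed

lemma add_char_0: "add_char w (0 :: 'a) = 1"
  by (simp add: add_char_def trace_nat_0)

lemma add_char_sum: "add_char w (\<Sum>i\<in>A. f i :: 'a) = (\<Prod>i\<in>A. add_char w (f i))"
  by (induction A rule: infinite_finite_induct) (simp_all add: add_char_0 add_char_add)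

lemma add_char_nontrivial: "\<exists>x::'a. add_char w x \<noteq> 1"
proof -
  have p: "2 \<le> CHAR('a)"
    by (rule two_le_CHAR_finite_field)
  then obtain x :: 'a where x: "trace_nat w x = 1"
    using trace_nat_surj[of 1] by auto
  have "add_char w x \<noteq> 1"
  proof
    assume "add_char w x = 1"
    then have "Re (add_char w x) = Re 1"
      by (simp only:)
    then have "cos (2 * pi / CHAR('a)) = cos 0"
      using x by (simp add: add_char_def)
    moreover have "2 * pi / CHAR('a) \<le> pi"
      using p by (simp add: divide_le_eq)
    ultimately have "2 * pi / CHAR('a) = 0"
      using cos_inj_pi[of "2 * pi / CHAR('a)" 0] by simp
    then show False
      using p by simp
  qed
  then show ?thesis
    by blast
qed

lemma sum_add_char_dot_prod_subspace:
  assumes V: "vec.subspace (V :: ('a ^ 'n) set)"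
  shows "(\<Sum>x\<in>V. add_char w (dot_prod x a))
           = (if \<forall>x\<in>V. dot_prod x a = 0 then of_nat (card V) else 0)"
proof (cases "\<forall>x\<in>V. dot_prod x a = 0")
  case False
  then obtain x0 where x0: "x0 \<in> V" "dot_prod x0 a \<noteq> 0"
    by auto
  obtain y :: 'a where y: "add_char w y \<noteq> 1"
    using add_char_nontrivial by blast
  define c where "c = y / dot_prod x0 a"
  have "c *s x0 \<in> V"
    using V x0 by (simp add: vec.subspace_scale)
  then have "(\<Sum>x\<in>V. add_char w (dot_prod (x + c *s x0) a)) = (\<Sum>x\<in>V. add_char w (dot_prod x a))"
    by (intro sum.reindex_bij_witness[of V "\<lambda>x. x - c *s x0" "\<lambda>x. x + c *s x0"])
       (use V in \<open>auto intro: vec.subspace_add vec.subspace_diff\<close>)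
  moreover have "dot_prod (x + c *s x0) a = dot_prod x a + y" for x
    using x0 by (simp add: dot_prod_add_left dot_prod_scale_left c_def)
  ultimately have "(\<Sum>x\<in>V. add_char w (dot_prod x a)) = add_char w y * (\<Sum>x\<in>V. add_char w (dot_prod x a))"
    by (simp add: add_char_add sum_distrib_left mult.commute)
  then have "(1 - add_char w y) * (\<Sum>x\<in>V. add_char w (dot_prod x a)) = 0"
    by (simp add: algebra_simps)
  then show ?thesis
    using y unfolding if_not_P[OF False] by simp
qed (simp add: add_char_0)

lemma sum_add_char_dot_prod_UNIV:
  "(\<Sum>a\<in>UNIV. add_char w (dot_prod (v :: 'a ^ 'n) a))
     = (if v = 0 then of_nat CARD('a ^ 'n) else 0)"
proof -
  have "(\<forall>x\<in>UNIV. dot_prod x v = 0) \<longleftrightarrow> v = 0"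
  proof
    assume "\<forall>x\<in>UNIV. dot_prod x v = 0"
    then show "v = 0"
      using dot_prod_axis_left[of _ v] by (simp add: vec_eq_iff)
  qed simp
  then show ?thesis
    using sum_add_char_dot_prod_subspace[of UNIV v] by (simp add: dot_prod_commute)
qed

lemma poisson_summation:
  assumes C: "vec.subspace (C :: ('a ^ 'n) set)"
  shows "(\<Sum>x\<in>C. f x) = of_nat (card C) / of_nat CARD('a ^ 'n)
           * (\<Sum>a\<in>dual_code C. \<Sum>y\<in>UNIV. f y * add_char w (- dot_prod y a))"
proof -
  let ?N = "CARD('a ^ 'n)"
  have delta: "f x * of_nat ?N = (\<Sum>y\<in>UNIV. f y * (\<Sum>a\<in>UNIV. add_char w (dot_prod (x - y) a)))" for x
    by (simp add: sum_add_char_dot_prod_UNIV if_distrib [of "\<lambda>t. f _ * t"] cong: if_cong)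
  have char_diff: "add_char w (dot_prod (x - y) a) = add_char w (dot_prod x a) * add_char w (- dot_prod y a)"
    for x y a :: "'a ^ 'n"
    by (simp add: dot_prod_diff_left add_char_add[symmetric])
  have "of_nat ?N * (\<Sum>x\<in>C. f x) = (\<Sum>x\<in>C. f x * of_nat ?N)"
    by (subst mult.commute) (rule sum_distrib_right)
  also have "\<dots> = (\<Sum>x\<in>C. \<Sum>y\<in>UNIV. f y * (\<Sum>a\<in>UNIV. add_char w (dot_prod (x - y) a)))"
    by (intro sum.cong refl delta)
  also have "\<dots> = (\<Sum>x\<in>C. \<Sum>y\<in>UNIV. \<Sum>a\<in>UNIV.
                      f y * add_char w (- dot_prod y a) * add_char w (dot_prod x a))"
    by (simp add: char_diff sum_distrib_left mult_ac)
  also have "\<dots> = (\<Sum>a\<in>UNIV. \<Sum>y\<in>UNIV. \<Sum>x\<in>C.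
                      f y * add_char w (- dot_prod y a) * add_char w (dot_prod x a))"
    by (subst sum.swap, subst (2) sum.swap, subst sum.swap) (rule refl)
  also have "\<dots> = (\<Sum>a\<in>UNIV. (\<Sum>y\<in>UNIV. f y * add_char w (- dot_prod y a))
                            * (\<Sum>x\<in>C. add_char w (dot_prod x a)))"
    by (simp add: sum_product)
  also have "\<dots> = (\<Sum>a\<in>UNIV. if a \<in> dual_code C
      then of_nat (card C) * (\<Sum>y\<in>UNIV. f y * add_char w (- dot_prod y a)) else 0)"
    by (intro sum.cong refl) (simp add: sum_add_char_dot_prod_subspace[OF C] dual_code_dot_prod)
  also have "\<dots> = of_nat (card C) * (\<Sum>a\<in>dual_code C. \<Sum>y\<in>UNIV. f y * add_char w (- dot_prod y a))"
    by (simp add: sum.If_cases sum_distrib_left)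
  finally show ?thesis
    by (simp add: field_simps)
qed

lemma card_mult_card_dual_code:
  assumes C: "vec.subspace (C :: ('a ^ 'n) set)"
  shows "card C * card (dual_code C) = CARD('a ^ 'n)"
proof -
  let ?f = "\<lambda>x::'a ^ 'n. if x = 0 then (1::complex) else 0"
  have "(\<Sum>x\<in>C. ?f x) = 1"
    using vec.subspace_0[OF C] by simp
  moreover have "(\<Sum>y\<in>UNIV. ?f y * add_char w (- dot_prod y a)) = 1" for a
    by (simp add: if_distrib [of "\<lambda>t. t * _"] add_char_0 cong: if_cong)
  ultimately have "(1::complex) = of_nat (card C) / of_nat CARD('a ^ 'n) * of_nat (card (dual_code C))"
    using poisson_summation[OF C, of ?f] by simp
  then have "of_nat CARD('a ^ 'n) = (of_nat (card C * card (dual_code C)) :: complex)"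
    by (simp add: field_simps)
  then show ?thesis
    by (simp only: of_nat_eq_iff)
qed

lemma card_dual_code_le:
  assumes C: "vec.subspace (C :: ('a ^ 'n) set)"
  shows "card (dual_code C) \<le> CARD('a) ^ (CARD('n) - vec.dim C)"
proof -
  let ?q = "CARD('a)" and ?k = "vec.dim C"
  have dim: "?k \<le> CARD('n)"
    by (rule dim_subset_UNIV_cart_gen)
  have "card (dual_code C) * ?q ^ ?k \<le> card (dual_code C) * card C"
    using card_subspace_ge[OF C] by simp
  also have "\<dots> = ?q ^ (CARD('n) - ?k) * ?q ^ ?k"
    using card_mult_card_dual_code[OF C] dim by (simp add: mult.commute flip: power_add)
  finally show ?thesis
    by simp
qed

lemma sum_norm_fiber_fourier_0:
  "(\<Sum>l\<in>range f. cmod (fiber_fourier w f (0 :: 'a) l)) = CARD('a)"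
proof -
  have "(\<Sum>l\<in>range f. cmod (fiber_fourier w f (0 :: 'a) l)) = (\<Sum>l\<in>range f. card {t. f t = l})"
    by (simp add: fiber_fourier_def add_char_0)
  also have "\<dots> = (\<Sum>l\<in>range f. \<Sum>t\<in>{t\<in>UNIV. f t = l}. 1)"
    by simp
  also have "\<dots> = CARD('a)"
    by (subst sum.group) auto
  finally show ?thesis
    by simp
qed

lemma norm_fiber_fourier_eq_sum_cos:
  "cmod (fiber_fourier w f b l) = (\<Sum>t\<in>{t. f t = l}.
     cos (2 * pi * trace_nat w (b * t) / CHAR('a) - Arg (fiber_fourier w f (b :: 'a) l)))"
proof -
  have "cmod (fiber_fourier w f b l) = Re (cis (- Arg (fiber_fourier w f b l)) * fiber_fourier w f b l)"
    by (rule norm_eq_Re_cis_Arg)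
  also have "\<dots> = (\<Sum>t\<in>{t. f t = l}. Re (cis (- Arg (fiber_fourier w f b l)) * add_char w (b * t)))"
    unfolding fiber_fourier_def by (simp only: sum_distrib_left Re_sum)
  finally show ?thesis
    by (simp add: add_char_def cis_mult)
qed

text \<open>The key estimate: rotating each fibre sum onto the positive real axis bounds the total by
  a sum of cosines over the values of the character, and for each value only the largest cosine
  matters.\<close>

lemma sum_norm_fiber_fourier_le:
  fixes f :: "'a \<Rightarrow> 'l" and b :: 'a
  assumes b: "b \<noteq> 0" and m: "card (range f) \<le> m"
  shows "(\<Sum>l\<in>range f. cmod (fiber_fourier w f b l))
           \<le> CARD('a) / CHAR('a) * (m * sin (pi / m) / sin (pi / CHAR('a)))"
proof -
  define p where "p = CHAR('a)"
  have p: "2 \<le> p"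
    unfolding p_def by (rule two_le_CHAR_finite_field)
  define \<theta> where "\<theta> l = Arg (fiber_fourier w f b l)" for l
  define G where "G r = Max ((\<lambda>l. cos (2 * pi * r / p - \<theta> l)) ` range f)" for r :: nat
  have "(\<Sum>l\<in>range f. cmod (fiber_fourier w f b l))
      = (\<Sum>l\<in>range f. \<Sum>t\<in>{t\<in>UNIV. f t = l}. cos (2 * pi * trace_nat w (b * t) / p - \<theta> l))"
    by (simp add: norm_fiber_fourier_eq_sum_cos \<theta>_def p_def)
  also have "\<dots> = (\<Sum>l\<in>range f. \<Sum>t\<in>{t\<in>UNIV. f t = l}. cos (2 * pi * trace_nat w (b * t) / p - \<theta> (f t)))"
    by (intro sum.cong refl) auto
  also have "\<dots> = (\<Sum>t\<in>UNIV. cos (2 * pi * trace_nat w (b * t) / p - \<theta> (f t)))"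
    by (rule sum.group) auto
  also have "\<dots> \<le> (\<Sum>t\<in>UNIV. G (trace_nat w (b * t)))"
    unfolding G_def by (intro sum_mono Max_ge) auto
  also have "\<dots> = (\<Sum>t\<in>UNIV. G (trace_nat w (t :: 'a)))"
    by (rule sum.reindex_bij_witness[of _ "\<lambda>t. t / b" "\<lambda>t. b * t"]) (use b in auto)
  also have "\<dots> = CARD('a) / p * (\<Sum>r<p. G r)"
    unfolding p_def by (rule sum_trace_nat)
  also have "\<dots> \<le> CARD('a) / p * (m * sin (pi / m) / sin (pi / p))"
    unfolding G_def by (intro mult_left_mono sum_Max_cos_roots_le p m) auto
  finally show ?thesis
    by (simp add: p_def)
qed

lemma sum_indicator_mult_add_char_eq_prod:
  fixes \<tau> :: "'n::finite \<Rightarrow> 'a \<Rightarrow> 'l"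
  shows "(\<Sum>y\<in>UNIV. (if (\<lambda>j. \<tau> j (y $ j)) = z then 1 else 0) * add_char w (- dot_prod y a))
       = (\<Prod>j\<in>UNIV. fiber_fourier w (\<tau> j) (- a $ j) (z j))"
proof -
  have "(if (\<lambda>j. \<tau> j (y $ j)) = z then 1 else 0) * add_char w (- dot_prod y a)
      = (\<Prod>j\<in>UNIV. (if \<tau> j (y $ j) = z j then 1 else 0) * add_char w (- a $ j * y $ j))"
    for y :: "'a ^ 'n"
  proof -
    have "- dot_prod y a = (\<Sum>j\<in>UNIV. - a $ j * y $ j)"
      by (simp add: dot_prod_def sum_negf mult.commute)
    then show ?thesis
      by (simp add: add_char_sum prod.distrib fun_eq_iff)
  qed
  then have "(\<Sum>y\<in>UNIV. (if (\<lambda>j. \<tau> j (y $ j)) = z then 1 else 0) * add_char w (- dot_prod y a))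
      = (\<Sum>y\<in>(UNIV :: ('a ^ 'n) set). \<Prod>j\<in>UNIV.
            (if \<tau> j (y $ j) = z j then 1 else 0) * add_char w (- a $ j * y $ j))"
    by simp
  also have "\<dots> = (\<Prod>j\<in>UNIV. \<Sum>t\<in>UNIV. (if \<tau> j t = z j then 1 else 0) * add_char w (- a $ j * t))"
    by (rule sum_vec_prod_eq_prod_sum)
  also have "\<dots> = (\<Prod>j\<in>UNIV. fiber_fourier w (\<tau> j) (- a $ j) (z j))"
    by (simp add: fiber_fourier_def if_distrib [of "\<lambda>t. t * _"] sum.If_cases cong: if_cong)
  finally show ?thesis .
qed

lemma pmf_tau_dist_code_diff:
  fixes \<tau> :: "'n::finite \<Rightarrow> 'a \<Rightarrow> 'l" and C :: "('a ^ 'n) set"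
  assumes C: "vec.subspace C"
  shows "complex_of_real (pmf (tau_dist \<tau> C) z - pmf (tau_dist \<tau> UNIV) z)
           = (\<Sum>a\<in>dual_code C - {0}. \<Prod>j\<in>UNIV. fiber_fourier w (\<tau> j) (- a $ j) (z j))
             / of_nat CARD('a ^ 'n)"
proof -
  define I where "I x = (if (\<lambda>j. \<tau> j (x $ j)) = z then 1 else 0 :: complex)" for x :: "'a ^ 'n"
  define F where "F a = (\<Prod>j\<in>UNIV. fiber_fourier w (\<tau> j) (- a $ j) (z j))" for a :: "'a ^ 'n"
  have Fourier_I: "(\<Sum>y\<in>UNIV. I y * add_char w (- dot_prod y a)) = F a" for a
    unfolding I_def F_def by (rule sum_indicator_mult_add_char_eq_prod)
  have pmf_eq: "complex_of_real (pmf (tau_dist \<tau> S) z) = (\<Sum>x\<in>S. I x) / of_nat (card S)"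
    if "S \<noteq> {}" for S
    using that by (simp add: pmf_tau_dist I_def sum.If_cases Int_def)
  have "C \<noteq> {}"
    using vec.subspace_0[OF C] by blast
  have "complex_of_real (pmf (tau_dist \<tau> C) z) = (\<Sum>x\<in>C. I x) / of_nat (card C)"
    using \<open>C \<noteq> {}\<close> by (rule pmf_eq)
  also have "(\<Sum>x\<in>C. I x) = of_nat (card C) / of_nat CARD('a ^ 'n) * (\<Sum>a\<in>dual_code C. F a)"
    by (simp add: poisson_summation[OF C] Fourier_I)
  finally have "complex_of_real (pmf (tau_dist \<tau> C) z) = (\<Sum>a\<in>dual_code C. F a) / of_nat CARD('a ^ 'n)"
    using \<open>C \<noteq> {}\<close> by simp
  moreover have "complex_of_real (pmf (tau_dist \<tau> UNIV) z) = F 0 / of_nat CARD('a ^ 'n)"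
    using Fourier_I[of 0] by (simp add: pmf_eq add_char_0)
  moreover have "(\<Sum>a\<in>dual_code C. F a) = F 0 + (\<Sum>a\<in>dual_code C - {0}. F a)"
    by (simp add: sum.remove dual_code_def)
  ultimately show ?thesis
    by (simp add: F_def add_divide_distrib)
qed

lemma abs_pmf_tau_dist_code_diff_le:
  fixes \<tau> :: "'n::finite \<Rightarrow> 'a \<Rightarrow> 'l" and C :: "('a ^ 'n) set"
  assumes C: "vec.subspace C"
  shows "\<bar>pmf (tau_dist \<tau> C) z - pmf (tau_dist \<tau> UNIV) z\<bar>
           \<le> (\<Sum>a\<in>dual_code C - {0}. \<Prod>j\<in>UNIV. cmod (fiber_fourier w (\<tau> j) (- a $ j) (z j)))
             / CARD('a ^ 'n)"
proof -
  have "\<bar>pmf (tau_dist \<tau> C) z - pmf (tau_dist \<tau> UNIV) z\<bar>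
      = cmod (complex_of_real (pmf (tau_dist \<tau> C) z - pmf (tau_dist \<tau> UNIV) z))"
    by (simp only: norm_of_real)
  also have "\<dots> = cmod (\<Sum>a\<in>dual_code C - {0}. \<Prod>j\<in>UNIV. fiber_fourier w (\<tau> j) (- a $ j) (z j))
                    / CARD('a ^ 'n)"
    unfolding pmf_tau_dist_code_diff[OF C] by (simp add: norm_divide norm_power)
  also have "\<dots> \<le> (\<Sum>a\<in>dual_code C - {0}. \<Prod>j\<in>UNIV. cmod (fiber_fourier w (\<tau> j) (- a $ j) (z j)))
                    / CARD('a ^ 'n)"
    by (intro divide_right_mono order.trans[OF norm_sum]) (simp_all add: prod_norm)
  finally show ?thesis .
qed

lemma SD_tau_dist_code_le:
  fixes \<tau> :: "'n::finite \<Rightarrow> 'a \<Rightarrow> 'l" and C :: "('a ^ 'n) set"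
  assumes C: "vec.subspace C"
  shows "SD (tau_dist \<tau> C) (tau_dist \<tau> UNIV)
           \<le> 1 / 2 / CARD('a ^ 'n) * (\<Sum>a\<in>dual_code C - {0}. \<Prod>j\<in>UNIV.
                 \<Sum>l\<in>range (\<tau> j). cmod (fiber_fourier w (\<tau> j) (- a $ j) l))"
proof -
  let ?D = "dual_code C - {0}" and ?N = "CARD('a ^ 'n)"
  let ?F = "\<lambda>a j l. cmod (fiber_fourier w (\<tau> j) (- a $ j) l)"
  define Z where "Z = PiE UNIV (\<lambda>j. range (\<tau> j))"
  have "C \<noteq> {}"
    using vec.subspace_0[OF C] by blast
  then have "set_pmf (tau_dist \<tau> C) \<union> set_pmf (tau_dist \<tau> UNIV) \<subseteq> Z"
    by (auto simp: set_pmf_tau_dist Z_def)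
  then have "SD (tau_dist \<tau> C) (tau_dist \<tau> UNIV)
      \<le> 1 / 2 * (\<Sum>z\<in>Z. \<bar>pmf (tau_dist \<tau> C) z - pmf (tau_dist \<tau> UNIV) z\<bar>)"
    unfolding SD_def by (intro mult_left_mono sum_mono2) (auto simp: Z_def intro!: finite_PiE)
  also have "\<dots> \<le> 1 / 2 * (\<Sum>z\<in>Z. (\<Sum>a\<in>?D. \<Prod>j\<in>UNIV. ?F a j (z j)) / ?N)"
    by (intro mult_left_mono sum_mono abs_pmf_tau_dist_code_diff_le[OF C]) simp
  also have "\<dots> = 1 / 2 / ?N * (\<Sum>z\<in>Z. \<Sum>a\<in>?D. \<Prod>j\<in>UNIV. ?F a j (z j))"
    by (simp add: sum_divide_distrib sum_distrib_left)
  also have "\<dots> = 1 / 2 / ?N * (\<Sum>a\<in>?D. \<Sum>z\<in>Z. \<Prod>j\<in>UNIV. ?F a j (z j))"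
    by (subst sum.swap) (rule refl)
  also have "\<dots> = 1 / 2 / ?N * (\<Sum>a\<in>?D. \<Prod>j\<in>UNIV. \<Sum>l\<in>range (\<tau> j). ?F a j l)"
    unfolding Z_def by (simp add: prod_sum_PiE)
  finally show ?thesis .
qed

lemma SD_tau_dist_code_weight_le:
  fixes \<tau> :: "'n::finite \<Rightarrow> 'a \<Rightarrow> 'l" and C :: "('a ^ 'n) set"
  assumes C: "vec.subspace C" and m: "\<And>j. card (range (\<tau> j)) \<le> m"
  defines "c \<equiv> m * sin (pi / m) / (CHAR('a) * sin (pi / CHAR('a)))"
  shows "SD (tau_dist \<tau> C) (tau_dist \<tau> UNIV) \<le> 1 / 2 * (\<Sum>a\<in>dual_code C - {0}. c ^ hweight a)"
proof -
  let ?q = "real CARD('a)"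
  have coord: "(\<Sum>l\<in>range (\<tau> j). cmod (fiber_fourier w (\<tau> j) (- a $ j) l))
      \<le> ?q * (if a $ j = 0 then 1 else c)" for j and a :: "'a ^ 'n"
    using sum_norm_fiber_fourier_0[of "\<tau> j"]
          sum_norm_fiber_fourier_le[of "- a $ j" "\<tau> j" m] m[of j]
    by (simp add: c_def field_simps)
  have weight: "(\<Prod>j\<in>UNIV. ?q * (if a $ j = 0 then 1 else c)) = ?q ^ CARD('n) * c ^ hweight a"
    for a :: "'a ^ 'n"
    by (simp add: prod.distrib prod.If_cases hweight_def Compl_eq_Diff_UNIV [symmetric] Collect_neg_eq)
  have "SD (tau_dist \<tau> C) (tau_dist \<tau> UNIV)
      \<le> 1 / 2 / CARD('a ^ 'n) * (\<Sum>a\<in>dual_code C - {0}. \<Prod>j\<in>UNIV. ?q * (if a $ j = 0 then 1 else c))"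
    by (rule order.trans[OF SD_tau_dist_code_le[OF C]])
       (intro mult_left_mono sum_mono prod_mono conjI coord sum_nonneg; simp)
  also have "\<dots> = 1 / 2 * (\<Sum>a\<in>dual_code C - {0}. c ^ hweight a)"
    by (simp add: weight sum_distrib_left)
  finally show ?thesis .
qed

lemma SD_tau_dist_code_min_dist_le:
  fixes \<tau> :: "'n::finite \<Rightarrow> 'a \<Rightarrow> 'l" and C :: "('a ^ 'n) set"
  assumes C: "vec.subspace C" and m: "\<And>j. card (range (\<tau> j)) \<le> m" "1 \<le> m" "m \<le> CHAR('a)"
  defines "c \<equiv> m * sin (pi / m) / (CHAR('a) * sin (pi / CHAR('a)))"
  shows "SD (tau_dist \<tau> C) (tau_dist \<tau> UNIV)
           \<le> 1 / 2 * CARD('a) ^ (CARD('n) - vec.dim C) * c ^ min_dist (dual_code C)"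
proof -
  have c: "0 \<le> c" "c \<le> 1"
    unfolding c_def using m(2,3) by (intro mult_sin_pi_divide_ratio_bounds; simp)+
  have "card (dual_code C - {0}) \<le> CARD('a) ^ (CARD('n) - vec.dim C)"
    using card_mono[of "dual_code C" "dual_code C - {0}"] card_dual_code_le[OF C] by simp
  then have card_le: "real (card (dual_code C - {0})) \<le> real CARD('a) ^ (CARD('n) - vec.dim C)"
    by (simp flip: of_nat_power)
  have "SD (tau_dist \<tau> C) (tau_dist \<tau> UNIV) \<le> 1 / 2 * (\<Sum>a\<in>dual_code C - {0}. c ^ hweight a)"
    unfolding c_def by (rule SD_tau_dist_code_weight_le[OF C m(1)])
  also have "\<dots> \<le> 1 / 2 * (card (dual_code C - {0}) * c ^ min_dist (dual_code C))"
    using sum_power_hweight_le[OF c] by simp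
  also have "\<dots> \<le> 1 / 2 * (CARD('a) ^ (CARD('n) - vec.dim C) * c ^ min_dist (dual_code C))"
    using card_le c by (intro mult_left_mono mult_right_mono) simp_all
  finally show ?thesis
    by simp
qed

end

theorem theorem4p1:
  fixes p w \<mu> k :: nat
    and C :: "('a::{field,finite} ^ 'n) set"
    and \<tau> :: "'n \<Rightarrow> 'a \<Rightarrow> bool list"
  assumes "prime p" and "w \<ge> 1" and "CARD('a) = p ^ w"
    and "\<mu> \<ge> 1" and "2 ^ \<mu> < p"
    and "vec.subspace C" and "vec.dim C = k"
    and "\<And>j x. length (\<tau> j x) = \<mu>"
  shows "SD (tau_dist \<tau> C) (tau_dist \<tau> UNIV)
         \<le> (1/2) * real p ^ (w * (CARD('n) - k))
           * ((2 ^ \<mu> * sin (pi / 2 ^ \<mu>)) / (real p * sin (pi / real p))) ^ min_dist (dual_code C)"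
proof -
  have CHAR: "CHAR('a) = p"
    using assms(1,3) by (rule CHAR_eq_if_card_eq_prime_power)
  then have card: "CARD('a) = CHAR('a) ^ w"
    using assms(3) by simp
  have "SD (tau_dist \<tau> C) (tau_dist \<tau> UNIV) \<le> 1 / 2 * CARD('a) ^ (CARD('n) - k)
      * (real (2 ^ \<mu>) * sin (pi / real (2 ^ \<mu>)) / (p * sin (pi / p))) ^ min_dist (dual_code C)"
    using SD_tau_dist_code_min_dist_le[OF card assms(6) card_range_bool_lists_le[OF assms(8)]]
      assms(5,7) CHAR by simp
  then show ?thesis
    using assms(3) by (simp add: power_mult)
qed

end
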